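(* Let $b \ge 2$ be an integer, let $m = 2b+1$, and let $f(x) = x^{2b+1} + x^{b+1} + x^{b} + x + 1 \in \mathbb{F}_2[x]$. There is a fixed, input-independent straight-line program using no AND operations and exactly $6b+1 = 3m-2$ two-input XOR operations, of XOR depth $3$ (i.e. time delay $3T_X$), which, on input the coefficient bits $d_0,\dots,d_{2m-2}$ of an arbitrary polynomial $D(x)=\sum_{i=0}^{2m-2} d_i x^i \in \mathbb{F}_2[x]$ of degree at most $2m-2$, outputs the $m$ coefficient bits of the remainder of $D$ upon division by $f$ (the unique polynomial of degree less than $m$ congruent to $D$ modulo $f$).
   Context: A straight-line program (bit-parallel circuit) over $\mathbb{F}_2$ here is a sequence of gates, each computing the XOR (sum in $\mathbb{F}_2$) of two values that are either input bits or outputs of earlier gates; each output bit is an input bit or a gate output. The number of XOR operations is the number of gates. $T_X$ denotes the delay of one 2-input XOR gate, and the time delay of the program is $T_X$ times the maximum number of gates on any path from an input to an output. *)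

theory Defs
  imports "HOL-Library.Z2" "HOL-Computational_Algebra.Polynomial"
begin

text \<open>A wire is either an input bit
  (index i) or the output of a gate (index j, counted from 0 in program order).
  A program is the list of its gates (each gate XORs two wires) together with
  a list of output wires.\<close>

datatype wire = Inp nat | Gate nat

type_synonym slp = "(wire \<times> wire) list"

definition wire_ok :: "nat \<Rightarrow> nat \<Rightarrow> wire \<Rightarrow> bool" where
  "wire_ok n k w = (case w of Inp i \<Rightarrow> i < n | Gate j \<Rightarrow> j < k)"

definition slp_wf :: "nat \<Rightarrow> slp \<Rightarrow> wire list \<Rightarrow> bool" where
  "slp_wf n gs outs =
     ((\<forall>j < length gs. wire_ok n j (fst (gs ! j)) \<and> wire_ok n j (snd (gs ! j)))
      \<and> (\<forall>w \<in> set outs. wire_ok n (length gs) w))"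

fun wire_val :: "(nat \<Rightarrow> bit) \<Rightarrow> bit list \<Rightarrow> wire \<Rightarrow> bit" where
  "wire_val d vs (Inp i) = d i"
| "wire_val d vs (Gate j) = vs ! j"

definition gate_vals :: "(nat \<Rightarrow> bit) \<Rightarrow> slp \<Rightarrow> bit list" where
  "gate_vals d gs =
     foldl (\<lambda>vs (a, b). vs @ [wire_val d vs a + wire_val d vs b]) [] gs"

definition slp_eval :: "slp \<Rightarrow> wire list \<Rightarrow> (nat \<Rightarrow> bit) \<Rightarrow> bit list" where
  "slp_eval gs outs d = map (wire_val d (gate_vals d gs)) outs"

fun wire_depth :: "nat list \<Rightarrow> wire \<Rightarrow> nat" where
  "wire_depth ds (Inp i) = 0"
| "wire_depth ds (Gate j) = ds ! j"

definition gate_depths :: "slp \<Rightarrow> nat list" where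
  "gate_depths gs =
     foldl (\<lambda>ds (a, b). ds @ [Suc (max (wire_depth ds a) (wire_depth ds b))]) [] gs"

definition slp_depth :: "slp \<Rightarrow> wire list \<Rightarrow> nat" where
  "slp_depth gs outs = Max (set (map (wire_depth (gate_depths gs)) outs))"

definition pentanomial :: "nat \<Rightarrow> bit poly" where
  "pentanomial b = monom 1 (2*b+1) + monom 1 (b+1) + monom 1 b + monom 1 1 + 1"

end

theory Submission
  imports Defs
begin

(* Write b = c + 1, so m = 2c + 3, and let h_i = d_(m+i) be the high input bits.
   Split D = L + x^m H with deg L < m and deg H <= m - 2, and f = x^m + p.  Since
   x^m = p mod f, D = L + p H; splitting p H = G0 + x^m G1 and folding once more gives
   the remainder L + G0 + p G1, which already has degree < m because 2 deg p <= m + 1.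
   Reading off coefficients, each remainder bit is d_k plus at most four h_i, and the
   sum h_i + h_(i+1) + h_(c+3+i) occurs in both bit i + 1 and bit c + 2 + i.  Computing
   these shared sums only once, three layers of XOR gates (two-term sums; shared and
   partial sums; final sums) suffice, 6b + 1 gates in all. *)

definition gates_wf :: "nat \<Rightarrow> slp \<Rightarrow> bool" where
  "gates_wf n gs \<longleftrightarrow>
     (\<forall>j < length gs. wire_ok n j (fst (gs ! j)) \<and> wire_ok n j (snd (gs ! j)))"

definition reads_below :: "nat \<Rightarrow> nat \<Rightarrow> slp \<Rightarrow> bool" where
  "reads_below n k gs \<longleftrightarrow> (\<forall>g \<in> set gs. wire_ok n k (fst g) \<and> wire_ok n k (snd g))"

definition gate_val :: "(nat \<Rightarrow> bit) \<Rightarrow> bit list \<Rightarrow> wire \<times> wire \<Rightarrow> bit" where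
  "gate_val d vs g = wire_val d vs (fst g) + wire_val d vs (snd g)"

definition gate_depth :: "nat list \<Rightarrow> wire \<times> wire \<Rightarrow> nat" where
  "gate_depth ds g = Suc (max (wire_depth ds (fst g)) (wire_depth ds (snd g)))"

lemma slp_wf_iff:
  "slp_wf n gs outs \<longleftrightarrow> gates_wf n gs \<and> (\<forall>w \<in> set outs. wire_ok n (length gs) w)"
  by (simp add: slp_wf_def gates_wf_def)

lemma wire_ok_mono: "wire_ok n k w \<Longrightarrow> k \<le> j \<Longrightarrow> wire_ok n j w"
  by (cases w) (auto simp: wire_ok_def)

lemma gates_wf_Nil [simp]: "gates_wf n []"
  by (simp add: gates_wf_def)

lemma gates_wf_append:
  assumes "gates_wf n gs" and "reads_below n (length gs) hs"
  shows "gates_wf n (gs @ hs)"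
  unfolding gates_wf_def
proof (intro allI impI)
  fix j assume j: "j < length (gs @ hs)"
  show "wire_ok n j (fst ((gs @ hs) ! j)) \<and> wire_ok n j (snd ((gs @ hs) ! j))"
  proof (cases "j < length gs")
    case True
    then show ?thesis using assms(1) by (simp add: gates_wf_def nth_append)
  next
    case False
    with j have "hs ! (j - length gs) \<in> set hs" by simp
    with False show ?thesis using assms(2)
      by (auto simp: reads_below_def nth_append intro: wire_ok_mono)
  qed
qed

lemma foldl_snoc_eq_append_map:
  assumes "\<And>x ws. x \<in> set xs \<Longrightarrow> step (acc @ ws) x = step acc x"
  shows "foldl (\<lambda>vs x. vs @ [step vs x]) acc xs = acc @ map (step acc) xs"
  using assms
proof (induction xs arbitrary: acc)
  case Nil
  then show ?case by simp
next
  case (Cons x xs)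
  have "step (acc @ [step acc x] @ ws) y = step (acc @ [step acc x]) y" if "y \<in> set xs" for y ws
    using Cons.prems that by (metis append_assoc list.set_intros(2))
  then show ?case
    using Cons by simp
qed

lemma wire_val_append: "wire_ok n (length vs) w \<Longrightarrow> wire_val d (vs @ ws) w = wire_val d vs w"
  by (cases w) (auto simp: wire_ok_def nth_append)

lemma wire_depth_append: "wire_ok n (length ds) w \<Longrightarrow> wire_depth (ds @ es) w = wire_depth ds w"
  by (cases w) (auto simp: wire_ok_def nth_append)

lemma length_gate_vals [simp]: "length (gate_vals d gs) = length gs"
  by (induction gs rule: rev_induct) (auto simp: gate_vals_def)

lemma length_gate_depths [simp]: "length (gate_depths gs) = length gs"
  by (induction gs rule: rev_induct) (auto simp: gate_depths_def)

lemma gate_vals_append: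
  assumes "reads_below n (length gs) hs"
  shows "gate_vals d (gs @ hs) = gate_vals d gs @ map (gate_val d (gate_vals d gs)) hs"
proof -
  have "gate_vals d gs' = foldl (\<lambda>vs g. vs @ [gate_val d vs g]) [] gs'" for gs'
    by (simp add: gate_vals_def gate_val_def split_def)
  moreover have "gate_val d (gate_vals d gs @ ws) g = gate_val d (gate_vals d gs) g"
    if "g \<in> set hs" for g ws
    using assms that by (simp add: reads_below_def gate_val_def wire_val_append[of n])
  ultimately show ?thesis
    by (simp add: foldl_snoc_eq_append_map)
qed

lemma gate_depths_append:
  assumes "reads_below n (length gs) hs"
  shows "gate_depths (gs @ hs) = gate_depths gs @ map (gate_depth (gate_depths gs)) hs"
proof -
  have "gate_depths gs' = foldl (\<lambda>ds g. ds @ [gate_depth ds g]) [] gs'" for gs'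
    by (simp add: gate_depths_def gate_depth_def split_def)
  moreover have "gate_depth (gate_depths gs @ es) g = gate_depth (gate_depths gs) g"
    if "g \<in> set hs" for g es
    using assms that by (simp add: reads_below_def gate_depth_def wire_depth_append[of n])
  ultimately show ?thesis
    by (simp add: foldl_snoc_eq_append_map)
qed

lemma poly_cutoff_add_shift:
  fixes p :: "'a::comm_semiring_1 poly"
  shows "poly_cutoff n p + monom 1 n * poly_shift n p = p"
  by (rule poly_eqI) (simp add: coeff_poly_cutoff coeff_poly_shift coeff_monom_mult)

lemma degree_poly_cutoff_less: "0 < n \<Longrightarrow> degree (poly_cutoff n p) < n"
proof -
  assume "0 < n"
  have "degree (poly_cutoff n p) \<le> n - 1"
    by (rule degree_le) (auto simp: coeff_poly_cutoff)
  with \<open>0 < n\<close> show ?thesis by linarith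
qed

lemma degree_poly_shift_le: "degree (poly_shift n p) \<le> degree p - n"
  by (rule degree_le) (simp add: coeff_poly_shift coeff_eq_0)

lemma coeff_sum_monom: "coeff (\<Sum>i<n. monom (a i) i) k = (if k < n then a k else 0)"
  by (simp add: coeff_sum)

lemma mod_monom_add_eq:
  fixes D p :: "'a::field poly"
  assumes deg_p: "degree p < m" "2 * degree p \<le> m + 1" and deg_D: "degree D \<le> 2 * m - 2"
  defines "G \<equiv> p * poly_shift m D"
  shows "D mod (monom 1 m + p) = poly_cutoff m D - poly_cutoff m G + p * poly_shift m G"
proof -
  define f where "f = monom 1 m + p"
  define R where "R = poly_cutoff m D - poly_cutoff m G + p * poly_shift m G"
  have deg_f: "degree f = m"
    using deg_p(1) by (simp add: f_def degree_add_eq_left degree_monom_eq)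
  have "D = poly_cutoff m D + (f - p) * poly_shift m D"
    using poly_cutoff_add_shift[of m D] by (simp add: f_def)
  also have "\<dots> = poly_cutoff m D + f * poly_shift m D - (poly_cutoff m G + (f - p) * poly_shift m G)"
    using poly_cutoff_add_shift[of m G] by (simp add: f_def G_def algebra_simps)
  also have "\<dots> = R + (poly_shift m D - poly_shift m G) * f"
    by (simp add: R_def algebra_simps)
  finally have "D mod f = R mod f"
    by (metis mod_mult_self1)
  moreover have "degree R < degree f"
  proof -
    have "degree (poly_shift m D) \<le> m - 2"
      using degree_poly_shift_le[of m D] deg_D by linarith
    then have "degree G \<le> degree p + (m - 2)"
      unfolding G_def using degree_mult_le[of p] by (meson add_le_mono le_refl order_trans)
    then have "degree (poly_shift m G) \<le> degree p + (m - 2) - m"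
      using degree_poly_shift_le[of m G] by linarith
    then have "degree (p * poly_shift m G) < m"
      using degree_mult_le[of p "poly_shift m G"] deg_p by linarith
    moreover have "degree (poly_cutoff m D - poly_cutoff m G) < m"
      using deg_p(1) by (intro degree_diff_less degree_poly_cutoff_less) auto
    ultimately show ?thesis
      unfolding R_def deg_f by (metis degree_add_le_max max_less_iff_conj le_less_trans)
  qed
  ultimately show ?thesis
    by (simp add: mod_poly_less R_def f_def)
qed

definition remainder_formula :: "(nat \<Rightarrow> bit) \<Rightarrow> nat \<Rightarrow> bit list" where
  "remainder_formula d c =
    (let h = (\<lambda>i. d (2*c+3+i));
         z = (\<lambda>i. h i + h (i+1) + (if i+1 < c then h (c+3+i) else 0))
     in [d 0 + h 0 + h (c+1) + h (c+2)]
        @ map (\<lambda>i. d (i+1) + h (c+1+i) + z i) [0..<c]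
        @ [d (c+1) + h 0 + h c + h (c+2) + h (2*c+1)]
        @ map (\<lambda>i. d (c+2+i) + h (c+2+i) + z i) [0..<c]
        @ [d (2*c+2) + h c + h (c+1)])"

lemma pentanomial_mod_coeffs:
  fixes d :: "nat \<Rightarrow> bit"
  assumes "1 \<le> c"
  shows "map (coeff ((\<Sum>i<4*c+5. monom (d i) i) mod pentanomial (Suc c))) [0..<2*c+3]
    = remainder_formula d c"
proof -
  define p :: "bit poly" where "p = monom 1 (c+2) + monom 1 (c+1) + monom 1 1 + 1"
  define D where "D = (\<Sum>i<4*c+5. monom (d i) i)"
  define G where "G = p * poly_shift (2*c+3) D"
  define h where "h i = d (2*c+3+i)" for i
  define z where "z i = h i + h (i+1) + (if i+1 < c then h (c+3+i) else 0)" for i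
  have pent: "pentanomial (Suc c) = monom 1 (2*c+3) + p"
    by (simp add: pentanomial_def p_def add.assoc numeral_3_eq_3)
  have deg_p: "degree p \<le> c+2"
    unfolding p_def by (rule degree_le) (simp add: coeff_monom)
  have deg_D: "degree D \<le> 2 * (2*c+3) - 2"
    unfolding D_def by (rule degree_le) (simp add: coeff_sum_monom)
  have R: "D mod pentanomial (Suc c)
      = poly_cutoff (2*c+3) D - poly_cutoff (2*c+3) G + p * poly_shift (2*c+3) G"
    unfolding pent G_def by (rule mod_monom_add_eq) (use deg_p deg_D in simp_all)
  have cp: "coeff (p * q) n = coeff q n + (if n < 1 then 0 else coeff q (n-1))
      + (if n < c+1 then 0 else coeff q (n-(c+1))) + (if n < c+2 then 0 else coeff q (n-(c+2)))"
    for q n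
    unfolding p_def by (simp add: distrib_right coeff_monom_mult add_ac del: add_bit_eq_xor)
  have cD: "coeff D k = (if k < 4*c+5 then d k else 0)" for k
    by (simp add: D_def coeff_sum_monom)
  have cH: "coeff (poly_shift (2*c+3) D) i = (if i < 2*c+2 then h i else 0)" for i
    by (simp add: cD coeff_poly_shift h_def add.commute)
  note simps = R coeff_poly_cutoff coeff_poly_shift cp cD cH G_def h_def z_def add_ac
  have "coeff (D mod pentanomial (Suc c)) 0 = d 0 + h 0 + h (c+1) + h (c+2)"
    using assms by (simp add: simps del: add_bit_eq_xor)
  moreover have "coeff (D mod pentanomial (Suc c)) (i+1) = d (i+1) + h (c+1+i) + z i"
    if "i < c" for i
    using assms that by (simp add: simps del: add_bit_eq_xor)
  moreover have "coeff (D mod pentanomial (Suc c)) (c+1) = d (c+1) + h 0 + h c + h (c+2) + h (2*c+1)"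
    using assms by (simp add: simps del: add_bit_eq_xor)
  moreover have "coeff (D mod pentanomial (Suc c)) (c+2+i) = d (c+2+i) + h (c+2+i) + z i"
    if "i < c" for i
    using assms that by (simp add: simps del: add_bit_eq_xor)
  moreover have "coeff (D mod pentanomial (Suc c)) (2*c+2) = d (2*c+2) + h c + h (c+1)"
    using assms by (simp add: simps del: add_bit_eq_xor)
  moreover have
    "[0..<2*c+3] = [0] @ map (\<lambda>i. i+1) [0..<c] @ [c+1] @ map (\<lambda>i. c+2+i) [0..<c] @ [2*c+2]"
    by (rule nth_equalityI) (auto simp: nth_append nth_Cons')
  ultimately show ?thesis
    unfolding D_def[symmetric] remainder_formula_def Let_def
    by (simp add: h_def z_def cong: map_cong del: add_bit_eq_xor)
qed

definition high_input :: "nat \<Rightarrow> nat \<Rightarrow> wire" where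
  "high_input c i = Inp (2*c+3+i)"

definition reduction_layer1 :: "nat \<Rightarrow> slp" where
  "reduction_layer1 c =
     [(high_input c 0, high_input c (c+2)), (Inp 0, high_input c (c+1)),
      (Inp (c+1), high_input c (2*c+1)), (Inp (2*c+2), high_input c c)]
     @ map (\<lambda>i. (high_input c i, high_input c (i+1))) [0..<c]
     @ map (\<lambda>i. (Inp (i+1), high_input c (c+1+i))) [0..<c]
     @ map (\<lambda>i. (Inp (c+2+i), high_input c (c+2+i))) [0..<c]"

definition reduction_layer2 :: "nat \<Rightarrow> slp" where
  "reduction_layer2 c =
     [(Gate 1, Gate 0), (Gate 0, high_input c c), (Gate 3, high_input c (c+1))]
     @ map (\<lambda>i. (Gate (4+i), high_input c (c+3+i))) [0..<c-1]"

(* The wire carrying h_i + h_(i+1) + h_(c+3+i); for i = c - 1 the last term does not occur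
   (it would exceed the input range) and the layer-1 sum h_i + h_(i+1) is used. *)
definition shared_sum :: "nat \<Rightarrow> nat \<Rightarrow> wire" where
  "shared_sum c i = (if i+1 < c then Gate (7+3*c+i) else Gate (4+i))"

definition reduction_layer3 :: "nat \<Rightarrow> slp" where
  "reduction_layer3 c =
     [(Gate 2, Gate (5+3*c))]
     @ map (\<lambda>i. (Gate (4+c+i), shared_sum c i)) [0..<c]
     @ map (\<lambda>i. (Gate (4+2*c+i), shared_sum c i)) [0..<c]"

definition reduction_gates :: "nat \<Rightarrow> slp" where
  "reduction_gates c = reduction_layer1 c @ reduction_layer2 c @ reduction_layer3 c"

definition reduction_outputs :: "nat \<Rightarrow> wire list" where
  "reduction_outputs c =
     [Gate (4+3*c)] @ map (\<lambda>i. Gate (7+4*c+i)) [0..<c] @ [Gate (6+4*c)]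
     @ map (\<lambda>i. Gate (7+5*c+i)) [0..<c] @ [Gate (6+3*c)]"

lemma length_reduction_layers:
  "length (reduction_layer1 c) = 4+3*c"
  "1 \<le> c \<Longrightarrow> length (reduction_layer2 c) = c+2"
  "length (reduction_layer3 c) = 2*c+1"
  by (auto simp: reduction_layer1_def reduction_layer2_def reduction_layer3_def)

lemma length_reduction_gates: "1 \<le> c \<Longrightarrow> length (reduction_gates c) = 6*c+7"
  by (simp add: reduction_gates_def length_reduction_layers)

lemma reads_below_reduction_layers:
  assumes "1 \<le> c"
  shows "reads_below (4*c+5) 0 (reduction_layer1 c)"
    and "reads_below (4*c+5) (4+3*c) (reduction_layer2 c)"
    and "reads_below (4*c+5) (6+4*c) (reduction_layer3 c)"
  using assms
  by (auto simp: reads_below_def wire_ok_def high_input_def shared_sum_def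
      reduction_layer1_def reduction_layer2_def reduction_layer3_def)

lemma reduction_gates_wf:
  assumes "1 \<le> c"
  shows "slp_wf (4*c+5) (reduction_gates c) (reduction_outputs c)"
proof -
  note layers = reads_below_reduction_layers[OF assms] length_reduction_layers[of c] assms
  have "gates_wf (4*c+5) (reduction_layer1 c)"
    using gates_wf_append[OF gates_wf_Nil, of "4*c+5" "reduction_layer1 c"] layers by simp
  then have "gates_wf (4*c+5) (reduction_layer1 c @ reduction_layer2 c)"
    by (rule gates_wf_append) (use layers in simp_all)
  then have "gates_wf (4*c+5) ((reduction_layer1 c @ reduction_layer2 c) @ reduction_layer3 c)"
    by (rule gates_wf_append) (use layers in simp_all)
  then show ?thesis
    using length_reduction_gates[OF assms]
    by (auto simp: slp_wf_iff wire_ok_def reduction_outputs_def reduction_gates_def)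
qed

lemma slp_eval_reduction:
  assumes "1 \<le> c"
  shows "slp_eval (reduction_gates c) (reduction_outputs c) d = remainder_formula d c"
proof -
  define h where "h i = d (2*c+3+i)" for i
  define z where "z i = h i + h (i+1) + (if i+1 < c then h (c+3+i) else 0)" for i
  define v1 where "v1 = map (gate_val d []) (reduction_layer1 c)"
  define v2 where "v2 = map (gate_val d v1) (reduction_layer2 c)"
  define v3 where "v3 = map (gate_val d (v1 @ v2)) (reduction_layer3 c)"
  have v1: "v1 = [h 0 + h (c+2), d 0 + h (c+1), d (c+1) + h (2*c+1), d (2*c+2) + h c]
      @ map (\<lambda>i. h i + h (i+1)) [0..<c] @ map (\<lambda>i. d (i+1) + h (c+1+i)) [0..<c]
      @ map (\<lambda>i. d (c+2+i) + h (c+2+i)) [0..<c]"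
    by (simp add: v1_def reduction_layer1_def gate_val_def high_input_def h_def del: add_bit_eq_xor)
  have v2: "v2 = [v1!1 + v1!0, v1!0 + h c, v1!3 + h (c+1)] @ map (\<lambda>i. v1!(4+i) + h (c+3+i)) [0..<c-1]"
    by (simp add: v2_def reduction_layer2_def gate_val_def high_input_def h_def del: add_bit_eq_xor)
  have v3: "v3 = [(v1 @ v2)!2 + (v1 @ v2)!(5+3*c)]
      @ map (\<lambda>i. (v1 @ v2)!(4+c+i) + wire_val d (v1 @ v2) (shared_sum c i)) [0..<c]
      @ map (\<lambda>i. (v1 @ v2)!(4+2*c+i) + wire_val d (v1 @ v2) (shared_sum c i)) [0..<c]"
    by (simp add: v3_def reduction_layer3_def gate_val_def del: add_bit_eq_xor)
  have len: "length v1 = 4+3*c" "length v2 = c+2"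
    using length_reduction_layers[of c] assms by (simp_all add: v1_def v2_def)
  have shared_val: "wire_val d (v1 @ v2) (shared_sum c i) = z i" if "i < c" for i
    using that len by (auto simp: shared_sum_def z_def nth_append v1 v2 simp del: add_bit_eq_xor)
  have "gate_vals d (reduction_gates c) = v1 @ v2 @ v3"
    using gate_vals_append[of "4*c+5" "reduction_layer1 c @ reduction_layer2 c" "reduction_layer3 c"]
      gate_vals_append[of "4*c+5" "reduction_layer1 c" "reduction_layer2 c"]
      gate_vals_append[of "4*c+5" "[]" "reduction_layer1 c"]
      reads_below_reduction_layers[OF assms] length_reduction_layers[of c] assms
    by (simp add: reduction_gates_def v1_def v2_def v3_def gate_vals_def)
  then have "slp_eval (reduction_gates c) (reduction_outputs c) d =
     [v2!0] @ map (\<lambda>i. v3!(1+i)) [0..<c] @ [v3!0] @ map (\<lambda>i. v3!(1+c+i)) [0..<c] @ [v2!2]"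
    using len assms by (simp add: slp_eval_def reduction_outputs_def nth_append)
  also have "\<dots> = remainder_formula d c"
    using len shared_val
    by (simp add: v1 v2 v3 nth_append remainder_formula_def h_def z_def Let_def del: add_bit_eq_xor)
  finally show ?thesis .
qed

lemma slp_depth_reduction:
  assumes "1 \<le> c"
  shows "slp_depth (reduction_gates c) (reduction_outputs c) = 3"
proof -
  define e1 where "e1 = map (gate_depth []) (reduction_layer1 c)"
  define e2 where "e2 = map (gate_depth e1) (reduction_layer2 c)"
  define e3 where "e3 = map (gate_depth (e1 @ e2)) (reduction_layer3 c)"
  have len: "length e1 = 4+3*c" "length e2 = c+2"
    using length_reduction_layers[of c] assms by (simp_all add: e1_def e2_def)
  have "\<forall>x \<in> set e1. x = 1"
    by (auto simp: e1_def reduction_layer1_def gate_depth_def high_input_def)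
  then have e1: "e1 ! j = 1" if "j < 4+3*c" for j
    using len that by simp
  then have "\<forall>x \<in> set e2. x = 2"
    by (auto simp: e2_def reduction_layer2_def gate_depth_def high_input_def)
  then have e2: "e2 ! j = 2" if "j < c+2" for j
    using len that by simp
  have e3: "e3 ! 0 = 3" "\<forall>x \<in> set e3. x \<le> 3"
    using e1 e2 len by (auto simp: e3_def reduction_layer3_def gate_depth_def shared_sum_def nth_append)
  have depths: "gate_depths (reduction_gates c) = e1 @ e2 @ e3"
    using gate_depths_append[of "4*c+5" "reduction_layer1 c @ reduction_layer2 c" "reduction_layer3 c"]
      gate_depths_append[of "4*c+5" "reduction_layer1 c" "reduction_layer2 c"]
      gate_depths_append[of "4*c+5" "[]" "reduction_layer1 c"]
      reads_below_reduction_layers[OF assms] length_reduction_layers[of c] assms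
    by (simp add: reduction_gates_def e1_def e2_def e3_def gate_depths_def)
  have "wire_depth (gate_depths (reduction_gates c)) w \<le> 3" if "w \<in> set (reduction_outputs c)" for w
  proof (cases w)
    case (Gate j)
    with that reduction_gates_wf[OF assms] have "j < length (e1 @ e2 @ e3)"
      by (auto simp: slp_wf_iff wire_ok_def simp flip: depths)
    then show ?thesis
      using e1 e2 e3(2) len Gate unfolding depths by (auto simp: nth_append dest!: nth_mem)
  qed simp
  moreover have "3 \<in> set (map (wire_depth (gate_depths (reduction_gates c))) (reduction_outputs c))"
  proof -
    have "wire_depth (gate_depths (reduction_gates c)) (Gate (6+4*c)) = 3"
      using e3(1) len by (simp add: depths nth_append)
    moreover have "Gate (6+4*c) \<in> set (reduction_outputs c)"
      by (simp add: reduction_outputs_def)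
    ultimately show ?thesis
      by (metis image_eqI set_map)
  qed
  ultimately show ?thesis
    unfolding slp_depth_def by (intro Max_eqI) auto
qed

theorem theorem1:
  fixes b :: nat
  assumes "b \<ge> 2"
  defines "m \<equiv> 2 * b + 1"
  shows "\<exists>(gs :: slp) (outs :: wire list).
           slp_wf (2 * m - 1) gs outs
         \<and> length gs = 6 * b + 1
         \<and> length outs = m
         \<and> slp_depth gs outs = 3
         \<and> (\<forall>d :: nat \<Rightarrow> bit. \<forall>k < m.
              slp_eval gs outs d ! k
                = coeff ((\<Sum>i < 2 * m - 1. monom (d i) i) mod pentanomial b) k)"
proof -
  obtain c where b: "b = Suc c" and c: "1 \<le> c"
    using assms(1) by (cases b) auto
  have m: "2 * m - 1 = 4*c+5" "m = 2*c+3" "6 * b + 1 = 6*c+7"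
    using b by (simp_all add: m_def)
  have "slp_eval (reduction_gates c) (reduction_outputs c) d ! k
      = coeff ((\<Sum>i < 4*c+5. monom (d i) i) mod pentanomial (Suc c)) k" if "k < 2*c+3" for d k
    using that by (simp add: slp_eval_reduction[OF c] flip: pentanomial_mod_coeffs[OF c])
  moreover have "length (reduction_outputs c) = m"
    by (simp add: reduction_outputs_def m)
  ultimately show ?thesis
    using reduction_gates_wf[OF c] length_reduction_gates[OF c] slp_depth_reduction[OF c]
    unfolding m(1,3) unfolding m(2) b by blast
qed

end
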